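(* Let $(\mathfrak{Q},\&,e)$ be a non-trivial unital quantale. For $S\subseteq\mathfrak{Q}$ let $\mathfrak{Q}_S\text{-}\mathbf{FOrd}$ denote the full subcategory of $\mathfrak{Q}\text{-}\mathbf{FOrd}$ consisting of the $\mathfrak{Q}$-preordered $\mathfrak{Q}$-subsets $(X,|\cdot|,\alpha)$ with $|x|\in S$ for all $x\in X$. If $S\subseteq T\subseteq\mathfrak{Q}$, then $\mathfrak{Q}_S\text{-}\mathbf{FOrd}$ is a coreflective subcategory of $\mathfrak{Q}_T\text{-}\mathbf{FOrd}$, with the coreflector sending each $(X,|\cdot|,\alpha)\in\mathfrak{Q}_T\text{-}\mathbf{FOrd}$ to the set $X_S=\{x\in X\mid |x|\in S\}$ equipped with the restrictions of $|\cdot|$ and $\alpha$.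
   Context: A unital quantale $(\mathfrak{Q},\&,e)$ is a complete lattice with an associative join-preserving (in each variable) multiplication $\&$ with unit $e$; non-trivial means $\bot<e$. Implications: $p\& q\le r\iff p\le r/ q\iff q\le p\backslash r$. A $\mathfrak{Q}$-subset is a set $X$ with a map $|\cdot|\colon X\to\mathfrak{Q}$. A $\mathfrak{Q}$-preorder on it is a map $\alpha\colon X\times X\to\mathfrak{Q}$ with, for all $x,y,z$: $(\alpha(x,y)/|x|)\&|x|=\alpha(x,y)=|y|\&(|y|\backslash\alpha(x,y))$; $|x|\le\alpha(x,x)$; $(\alpha(y,z)/|y|)\&\alpha(x,y)=\alpha(y,z)\&(|y|\backslash\alpha(x,y))\le\alpha(x,z)$. $\mathfrak{Q}\text{-}\mathbf{FOrd}$ is the category whose objects are $\mathfrak{Q}$-preordered $\mathfrak{Q}$-subsets $(X,|\cdot|,\alpha)$ and whose morphisms $f\colon(X,\alpha)\to(Y,\beta)$ are $\mathfrak{Q}$-order-preserving maps: maps $f\colon X\to Y$ with $|fx|=|x|$ and $\alpha(x,x')\le\beta(fx,fx')$ for all $x,x'\in X$. A full subcategory is coreflective if the inclusion functor has a right adjoint (the coreflector). *)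

theory Defs
  imports Main
begin

definition unital_quantale :: "('q::complete_lattice \<Rightarrow> 'q \<Rightarrow> 'q) \<Rightarrow> 'q \<Rightarrow> bool" where
  "unital_quantale m e \<longleftrightarrow>
     (\<forall>a b c. m (m a b) c = m a (m b c)) \<and>
     (\<forall>a A. m a (Sup A) = Sup (m a ` A)) \<and>
     (\<forall>A b. m (Sup A) b = Sup ((\<lambda>a. m a b) ` A)) \<and>
     (\<forall>a. m e a = a \<and> m a e = a)"

text \<open>Right implication r / q (p & q \<le> r iff p \<le> r / q).\<close>
definition rimp :: "('q::complete_lattice \<Rightarrow> 'q \<Rightarrow> 'q) \<Rightarrow> 'q \<Rightarrow> 'q \<Rightarrow> 'q" where
  "rimp m r q = Sup {p. m p q \<le> r}"

text \<open>Left implication p \ r (p & q \<le> r iff q \<le> p \ r).\<close>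
definition limp :: "('q::complete_lattice \<Rightarrow> 'q \<Rightarrow> 'q) \<Rightarrow> 'q \<Rightarrow> 'q \<Rightarrow> 'q" where
  "limp m p r = Sup {q. m p q \<le> r}"

definition Q_preorder ::
  "('q::complete_lattice \<Rightarrow> 'q \<Rightarrow> 'q) \<Rightarrow> 'a set \<Rightarrow> ('a \<Rightarrow> 'q) \<Rightarrow> ('a \<Rightarrow> 'a \<Rightarrow> 'q) \<Rightarrow> bool" where
  "Q_preorder m X ext \<alpha> \<longleftrightarrow>
     (\<forall>x\<in>X. \<forall>y\<in>X. m (rimp m (\<alpha> x y) (ext x)) (ext x) = \<alpha> x y
                    \<and> \<alpha> x y = m (ext y) (limp m (ext y) (\<alpha> x y))) \<and>
     (\<forall>x\<in>X. ext x \<le> \<alpha> x x) \<and>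
     (\<forall>x\<in>X. \<forall>y\<in>X. \<forall>z\<in>X.
        m (rimp m (\<alpha> y z) (ext y)) (\<alpha> x y) = m (\<alpha> y z) (limp m (ext y) (\<alpha> x y))
        \<and> m (rimp m (\<alpha> y z) (ext y)) (\<alpha> x y) \<le> \<alpha> x z)"

definition FOrd_obj ::
  "('q::complete_lattice \<Rightarrow> 'q \<Rightarrow> 'q) \<Rightarrow> 'q set \<Rightarrow> 'a set \<Rightarrow> ('a \<Rightarrow> 'q) \<Rightarrow> ('a \<Rightarrow> 'a \<Rightarrow> 'q) \<Rightarrow> bool" where
  "FOrd_obj m S X ext \<alpha> \<longleftrightarrow> Q_preorder m X ext \<alpha> \<and> (\<forall>x\<in>X. ext x \<in> S)"

definition FOrd_mor ::
  "'a set \<Rightarrow> ('a \<Rightarrow> 'q::complete_lattice) \<Rightarrow> ('a \<Rightarrow> 'a \<Rightarrow> 'q) \<Rightarrow>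
   'b set \<Rightarrow> ('b \<Rightarrow> 'q) \<Rightarrow> ('b \<Rightarrow> 'b \<Rightarrow> 'q) \<Rightarrow> ('a \<Rightarrow> 'b) \<Rightarrow> bool" where
  "FOrd_mor X ext \<alpha> Y ext' \<beta> f \<longleftrightarrow>
     (\<forall>x\<in>X. f x \<in> Y \<and> ext' (f x) = ext x) \<and>
     (\<forall>x\<in>X. \<forall>x'\<in>X. \<alpha> x x' \<le> \<beta> (f x) (f x'))"

end

theory Submission
  imports Defs
begin

text \<open>All axioms of a \<open>\<Q>\<close>-preorder and of a morphism are pointwise conditions, so they
  survive restriction to the subset \<open>X\<^sub>S\<close>. Morphisms preserve extents, hence every morphism
  from an object with extents in \<open>S\<close> into \<open>X\<close> already lands in \<open>X\<^sub>S\<close>; it factors through the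
  inclusion \<open>X\<^sub>S \<hookrightarrow> X\<close>, uniquely because the inclusion is injective.\<close>

lemma Q_preorder_subset:
  assumes "Q_preorder m X ext \<alpha>" and "Y \<subseteq> X"
  shows "Q_preorder m Y ext \<alpha>"
  using assms unfolding Q_preorder_def by blast

lemma FOrd_obj_restrict_extents:
  assumes "FOrd_obj m T X ext \<alpha>"
  shows "FOrd_obj m S {x\<in>X. ext x \<in> S} ext \<alpha>"
  using assms Q_preorder_subset[of m X ext \<alpha> "{x\<in>X. ext x \<in> S}"]
  unfolding FOrd_obj_def by auto

lemma FOrd_mor_id_subset:
  assumes "Y \<subseteq> X"
  shows "FOrd_mor Y ext \<alpha> X ext \<alpha> id"
  using assms unfolding FOrd_mor_def by auto

lemma FOrd_mor_restrict_codomain: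
  assumes "FOrd_mor A extA \<alpha>A X ext \<alpha> f" and "f ` A \<subseteq> Y"
  shows "FOrd_mor A extA \<alpha>A Y ext \<alpha> f"
  using assms unfolding FOrd_mor_def by auto

lemma FOrd_mor_image_extents:
  assumes "FOrd_mor A extA \<alpha>A X ext \<alpha> f" and "\<forall>a\<in>A. extA a \<in> S"
  shows "f ` A \<subseteq> {x\<in>X. ext x \<in> S}"
  using assms unfolding FOrd_mor_def by auto

theorem lemma3p8:
  fixes m :: "'q::complete_lattice \<Rightarrow> 'q \<Rightarrow> 'q" and e :: 'q
    and S T :: "'q set"
    and X :: "'a set" and ext :: "'a \<Rightarrow> 'q" and \<alpha> :: "'a \<Rightarrow> 'a \<Rightarrow> 'q"
  assumes "unital_quantale m e" and "bot < e"
    and "S \<subseteq> T"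
    and "FOrd_obj m T X ext \<alpha>"
  shows "FOrd_obj m S {x\<in>X. ext x \<in> S} ext \<alpha>
    \<and> FOrd_mor {x\<in>X. ext x \<in> S} ext \<alpha> X ext \<alpha> id
    \<and> (\<forall>(A::'b set) extA \<alpha>A f.
          FOrd_obj m S A extA \<alpha>A \<and> FOrd_mor A extA \<alpha>A X ext \<alpha> f \<longrightarrow>
          (\<exists>g. FOrd_mor A extA \<alpha>A {x\<in>X. ext x \<in> S} ext \<alpha> g
               \<and> (\<forall>a\<in>A. id (g a) = f a)
               \<and> (\<forall>g'. FOrd_mor A extA \<alpha>A {x\<in>X. ext x \<in> S} ext \<alpha> g'
                        \<and> (\<forall>a\<in>A. id (g' a) = f a) \<longrightarrow> (\<forall>a\<in>A. g' a = g a))))"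
proof (intro conjI allI impI)
  show "FOrd_obj m S {x\<in>X. ext x \<in> S} ext \<alpha>"
    using assms(4) by (rule FOrd_obj_restrict_extents)
  show "FOrd_mor {x\<in>X. ext x \<in> S} ext \<alpha> X ext \<alpha> id"
    by (rule FOrd_mor_id_subset) blast
next
  fix A :: "'b set" and extA \<alpha>A f
  assume "FOrd_obj m S A extA \<alpha>A \<and> FOrd_mor A extA \<alpha>A X ext \<alpha> f"
  then have f: "FOrd_mor A extA \<alpha>A X ext \<alpha> f" and extA: "\<forall>a\<in>A. extA a \<in> S"
    unfolding FOrd_obj_def by auto
  have "FOrd_mor A extA \<alpha>A {x\<in>X. ext x \<in> S} ext \<alpha> f"
    using f FOrd_mor_image_extents[OF f extA] by (rule FOrd_mor_restrict_codomain)
  then show "\<exists>g. FOrd_mor A extA \<alpha>A {x\<in>X. ext x \<in> S} ext \<alpha> g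
               \<and> (\<forall>a\<in>A. id (g a) = f a)
               \<and> (\<forall>g'. FOrd_mor A extA \<alpha>A {x\<in>X. ext x \<in> S} ext \<alpha> g'
                        \<and> (\<forall>a\<in>A. id (g' a) = f a) \<longrightarrow> (\<forall>a\<in>A. g' a = g a))"
    by (intro exI[of _ f]) auto
qed

end
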